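(* For every $n\in\mathbb{N}$, with $N=4^n$ the number of vertices, the diameter $D_n$ of $\mathcal{T}_n$ is $$D_n=\frac{2\sqrt{N}-1}{3}=\frac{2^{n+1}-1}{3}\ \text{ if } n \text{ is odd},\qquad D_n=\frac{2(\sqrt{N}-1)}{3}=\frac{2(2^{n}-1)}{3}\ \text{ if } n \text{ is even}.$$
   Context: For $n\in\mathbb{N}$ let $G_n=\mathbb{Z}_{2^n}\times\mathbb{Z}_{2^n}$ (additive group), so $|G_n|=N=4^n$. Let $S^+=\{(-1,-1),(1,0),(0,1)\}$ and $S=S^+\cup(-S^+)=\{\pm(1,0),\pm(0,1),\pm(1,1)\}$. The undirected graph $\mathcal{T}_n$ (the undirected "arrowhead", equivalently the undirected "diamond") is the Cayley graph $\Gamma(G_n,S)$: its vertex set is $G_n$ and each vertex $u$ is adjacent to $u+s$ for every $s\in S$ (arithmetic modulo $2^n$ in each coordinate). The diameter of a graph is the maximum, over all pairs of vertices, of the length of a shortest path between them. ($\mathcal{T}_0$ is a single vertex.) *)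

theory Defs
  imports Main
begin

text \<open>Vertex set of T_n: the group Z_{2^n} x Z_{2^n}, represented by pairs of
  canonical residues in {0..<2^n}.\<close>
definition verts :: "nat \<Rightarrow> (int \<times> int) set" where
  "verts n = {0..<2^n} \<times> {0..<2^n}"

definition gens :: "(int \<times> int) set" where
  "gens = {(1,0), (-1,0), (0,1), (0,-1), (1,1), (-1,-1)}"

definition adj :: "nat \<Rightarrow> int \<times> int \<Rightarrow> int \<times> int \<Rightarrow> bool" where
  "adj n u v \<longleftrightarrow> u \<in> verts n \<and> v \<in> verts n \<and>
     (\<exists>s\<in>gens. fst v = (fst u + fst s) mod 2^n \<and> snd v = (snd u + snd s) mod 2^n)"

definition gdist :: "nat \<Rightarrow> int \<times> int \<Rightarrow> int \<times> int \<Rightarrow> nat" where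
  "gdist n u v = (LEAST k. (adj n ^^ k) u v)"

definition diameter :: "nat \<Rightarrow> nat" where
  "diameter n = Max {gdist n u v | u v. u \<in> verts n \<and> v \<in> verts n}"

end

theory Submission
  imports Defs
begin

text \<open>Walks of length k from u realise exactly the displacements (a, b) \<in> \<int> \<times> \<int> of hexagonal
  norm max |a| |b| |a - b| \<le> k: each generator changes the norm by at most one, and a nonzero
  vector can always be shortened by a generator. So the distance from u to v is the least
  hexagonal norm of a lift of v - u. Among the four lifts of a residue pair, three have norms
  summing to 2m, so every distance is at most 2m/3; conversely every lift of (-D, D) with
  3D \<le> 2m has norm at least D. With m = 2^n the diameter is \<lfloor>2^(n+1)/3\<rfloor>.\<close>

definition hex_norm :: "int \<Rightarrow> int \<Rightarrow> int" where
  "hex_norm a b = max \<bar>a\<bar> (max \<bar>b\<bar> \<bar>a - b\<bar>)"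

lemma hex_norm_nonneg: "hex_norm a b \<ge> 0"
  by (simp add: hex_norm_def)

lemma hex_norm_add_gen_le:
  assumes "s \<in> gens"
  shows "hex_norm (a + fst s) (b + snd s) \<le> hex_norm a b + 1"
  using assms unfolding gens_def hex_norm_def by auto

lemma hex_norm_Suc_diff_gen:
  assumes "hex_norm a b = int (Suc k)"
  shows "\<exists>s\<in>gens. hex_norm (a - fst s) (b - snd s) = int k"
proof -
  have "a \<noteq> 0 \<or> b \<noteq> 0"
    using assms by (auto simp: hex_norm_def)
  then consider "a > 0" "b > 0" | "a < 0" "b < 0" | "a > 0" "b \<le> 0" | "a < 0" "b \<ge> 0"
    | "a = 0" "b > 0" | "a = 0" "b < 0"
    by linarith
  then show ?thesis
  proof cases
    case 1 show ?thesis by (rule bexI[of _ "(1, 1)"]) (use 1 assms in \<open>auto simp: gens_def hex_norm_def\<close>)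
  next
    case 2 show ?thesis by (rule bexI[of _ "(-1, -1)"]) (use 2 assms in \<open>auto simp: gens_def hex_norm_def\<close>)
  next
    case 3 show ?thesis by (rule bexI[of _ "(1, 0)"]) (use 3 assms in \<open>auto simp: gens_def hex_norm_def\<close>)
  next
    case 4 show ?thesis by (rule bexI[of _ "(-1, 0)"]) (use 4 assms in \<open>auto simp: gens_def hex_norm_def\<close>)
  next
    case 5 show ?thesis by (rule bexI[of _ "(0, 1)"]) (use 5 assms in \<open>auto simp: gens_def hex_norm_def\<close>)
  next
    case 6 show ?thesis by (rule bexI[of _ "(0, -1)"]) (use 6 assms in \<open>auto simp: gens_def hex_norm_def\<close>)
  qed
qed

lemma verts_mod_eq:
  assumes "u \<in> verts n"
  shows "fst u mod 2^n = fst u" "snd u mod 2^n = snd u"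
  using assms by (auto simp: verts_def)

lemma adj_relpow_hex_norm:
  assumes "u \<in> verts n" "hex_norm a b = int k"
  shows "(adj n ^^ k) u ((fst u + a) mod 2^n, (snd u + b) mod 2^n)"
  using assms
proof (induction k arbitrary: u a b)
  case 0
  then have "a = 0" "b = 0" by (auto simp: hex_norm_def)
  with verts_mod_eq[OF 0(1)] show ?case by simp
next
  case (Suc k)
  obtain s where s: "s \<in> gens" "hex_norm (a - fst s) (b - snd s) = int k"
    using hex_norm_Suc_diff_gen[OF Suc(3)] by blast
  define w where "w = ((fst u + fst s) mod 2^n, (snd u + snd s) mod (2::int)^n)"
  have w: "w \<in> verts n" by (simp add: w_def verts_def)
  have "adj n u w" using Suc(2) w s(1) unfolding adj_def w_def by auto
  moreover have "(adj n ^^ k) w ((fst w + (a - fst s)) mod 2^n, (snd w + (b - snd s)) mod 2^n)"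
    using Suc.IH[OF w s(2)] .
  moreover have "(fst w + (a - fst s)) mod 2^n = (fst u + a) mod 2^n"
    "(snd w + (b - snd s)) mod 2^n = (snd u + b) mod 2^n"
    unfolding w_def by (simp_all add: mod_add_left_eq)
  ultimately show ?case by (metis relpowp_Suc_I2)
qed

lemma adj_relpow_obtains_lift:
  assumes "(adj n ^^ k) u v" "u \<in> verts n"
  obtains a b where "(fst u + a) mod 2^n = fst v" "(snd u + b) mod 2^n = snd v"
    "hex_norm a b \<le> int k"
proof -
  have "\<exists>a b. (fst u + a) mod 2^n = fst v \<and> (snd u + b) mod 2^n = snd v \<and> hex_norm a b \<le> int k"
    using assms(1)
  proof (induction k arbitrary: v)
    case 0
    then show ?case
      using verts_mod_eq[OF assms(2)] by (intro exI[of _ 0]) (auto simp: hex_norm_def)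
  next
    case (Suc k)
    from Suc(2) obtain w where w: "(adj n ^^ k) u w" "adj n w v" by (auto elim: relpowp_Suc_E)
    from Suc.IH[OF w(1)] obtain a b where ab: "(fst u + a) mod 2^n = fst w"
      "(snd u + b) mod 2^n = snd w" "hex_norm a b \<le> int k" by blast
    from w(2) obtain s where s: "s \<in> gens" "fst v = (fst w + fst s) mod 2^n"
      "snd v = (snd w + snd s) mod 2^n" unfolding adj_def by blast
    have "(fst u + (a + fst s)) mod 2^n = fst v" "(snd u + (b + snd s)) mod 2^n = snd v"
      using ab(1,2) s(2,3) by (metis add.assoc mod_add_left_eq)+
    moreover have "hex_norm (a + fst s) (b + snd s) \<le> int (Suc k)"
      using hex_norm_add_gen_le[OF s(1), of a b] ab(3) by simp
    ultimately show ?case by blast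
  qed
  then show thesis using that by blast
qed

lemma gdist_le_hex_norm:
  assumes "u \<in> verts n" "(fst u + a) mod 2^n = fst v" "(snd u + b) mod 2^n = snd v"
  shows "int (gdist n u v) \<le> hex_norm a b"
proof -
  have "(adj n ^^ nat (hex_norm a b)) u v"
    using adj_relpow_hex_norm[OF assms(1), of a b] hex_norm_nonneg assms(2,3)
    by (metis int_nat_eq prod.collapse)
  then have "gdist n u v \<le> nat (hex_norm a b)"
    unfolding gdist_def by (rule Least_le)
  then show ?thesis using hex_norm_nonneg[of a b] by (simp add: le_nat_iff)
qed

lemma gdist_obtains_lift:
  assumes "u \<in> verts n" "v \<in> verts n"
  obtains a b where "(fst u + a) mod 2^n = fst v" "(snd u + b) mod 2^n = snd v"
    "hex_norm a b \<le> int (gdist n u v)"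
proof -
  have "(adj n ^^ nat (hex_norm (fst v - fst u) (snd v - snd u))) u v"
    using adj_relpow_hex_norm[OF assms(1), of "fst v - fst u" "snd v - snd u"]
      verts_mod_eq[OF assms(2)] hex_norm_nonneg by simp
  then have "(adj n ^^ gdist n u v) u v"
    unfolding gdist_def by (rule LeastI)
  then show thesis using adj_relpow_obtains_lift[OF _ assms(1)] that by blast
qed

lemma hex_norm_some_lift_le:
  fixes x y m :: int
  assumes "0 \<le> x" "x < m" "0 \<le> y" "y < m"
  obtains a b where "a \<in> {x, x - m}" "b \<in> {y, y - m}" "3 * hex_norm a b \<le> 2 * m"
proof -
  have "hex_norm x y = max x y" "hex_norm (x - m) (y - m) = max (m - x) (m - y)"
    "hex_norm (x - m) y = m - x + y" "hex_norm x (y - m) = m - y + x"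
    using assms by (auto simp: hex_norm_def max_def)
  \<comment> \<open>if x \<le> y the norms y, m - x, m - y + x sum to 2m; symmetrically otherwise\<close>
  then have "3 * hex_norm x y \<le> 2 * m \<or> 3 * hex_norm (x - m) (y - m) \<le> 2 * m
      \<or> 3 * hex_norm (x - m) y \<le> 2 * m \<or> 3 * hex_norm x (y - m) \<le> 2 * m"
    by (auto simp: max_def)
  then show thesis using that by blast
qed

lemma hex_norm_lift_ge:
  fixes i j m D :: int
  assumes "0 \<le> D" "3 * D \<le> 2 * m"
  shows "hex_norm (m * i - D) (m * j + D) \<ge> D"
proof -
  have "m \<ge> 0" using assms by linarith
  have "\<bar>m * i - D\<bar> \<ge> D \<or> i = 1"
  proof -
    consider "i \<le> 0" | "i = 1" | "i \<ge> 2" by linarith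
    then show ?thesis
    proof cases
      case 1 then have "m * i \<le> 0" using \<open>m \<ge> 0\<close> by (simp add: mult_nonneg_nonpos)
      then show ?thesis using assms by auto
    next
      case 3 then have "m * 2 \<le> m * i" using \<open>m \<ge> 0\<close> by (rule mult_left_mono)
      then show ?thesis using assms by auto
    qed simp
  qed
  moreover have "\<bar>m * j + D\<bar> \<ge> D \<or> j = -1"
  proof -
    consider "j \<ge> 0" | "j = -1" | "j \<le> -2" by linarith
    then show ?thesis
    proof cases
      case 1 then have "m * j \<ge> 0" using \<open>m \<ge> 0\<close> by simp
      then show ?thesis using assms by auto
    next
      case 3 then have "m * j \<le> m * -2" using \<open>m \<ge> 0\<close> by (rule mult_left_mono)
      then show ?thesis using assms by auto
    qed simp
  qed
  ultimately show ?thesis using assms unfolding hex_norm_def by auto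
qed

lemma three_gdist_le:
  assumes "u \<in> verts n" "v \<in> verts n"
  shows "3 * gdist n u v \<le> 2 * 2^n"
proof -
  define m :: int where "m = 2^n"
  have m: "m > 0" by (simp add: m_def)
  obtain a b where ab: "a \<in> {(fst v - fst u) mod m, (fst v - fst u) mod m - m}"
    "b \<in> {(snd v - snd u) mod m, (snd v - snd u) mod m - m}" "3 * hex_norm a b \<le> 2 * m"
    using hex_norm_some_lift_le[of "(fst v - fst u) mod m" m "(snd v - snd u) mod m"] m by auto
  have "(fst u + a) mod m = fst v" "(snd u + b) mod m = snd v"
    using ab(1,2) verts_mod_eq[OF assms(2)]
    by (auto simp: m_def add_diff_eq mod_add_right_eq)
  then have "int (gdist n u v) \<le> hex_norm a b"
    using gdist_le_hex_norm[OF assms(1)] by (simp add: m_def)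
  then have "int (3 * gdist n u v) \<le> int (2 * 2^n)" using ab(3) by (simp add: m_def)
  then show ?thesis by (simp only: of_nat_le_iff)
qed

lemma exists_vertex_gdist_ge:
  fixes D :: nat
  assumes "3 * D \<le> 2 * 2^n"
  shows "\<exists>v\<in>verts n. D \<le> gdist n (0, 0) v"
proof -
  define m :: int where "m = 2^n"
  define v where "v = ((m - int D) mod m, int D)"
  have "int (3 * D) \<le> int (2 * 2^n)" using assms by linarith
  then have D: "3 * int D \<le> 2 * m" by (simp add: m_def)
  moreover have "m > 0" by (simp add: m_def)
  ultimately have "int D < m" by linarith
  then have v: "(0, 0) \<in> verts n" "v \<in> verts n" "int D mod m = int D"
    by (simp_all add: verts_def m_def v_def)
  obtain a b where ab: "a mod m = (m - int D) mod m" "b mod m = int D mod m"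
    "hex_norm a b \<le> int (gdist n (0, 0) v)"
    using gdist_obtains_lift[OF v(1,2)] v(3) by (auto simp: m_def v_def)
  have "m dvd a + int D" "m dvd b - int D"
    using ab(1,2) by (simp_all add: mod_eq_dvd_iff)
  then obtain i j where "a = m * i - int D" "b = m * j + int D"
    by (metis add_diff_cancel_right' diff_add_cancel dvdE)
  then have "int D \<le> hex_norm a b"
    using hex_norm_lift_ge[OF _ D(1)] by simp
  with ab(3) have "D \<le> gdist n (0, 0) v" by linarith
  with v(2) show ?thesis ..
qed

lemma diameter_eq: "diameter n = 2 * 2^n div 3"
proof -
  define D :: nat where "D = 2 * 2^n div 3"
  have le_D: "gdist n u v \<le> D" if "u \<in> verts n" "v \<in> verts n" for u v
    using three_gdist_le[OF that] unfolding D_def by linarith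
  have "3 * D \<le> 2 * 2^n" by (simp add: D_def)
  then obtain w where w: "w \<in> verts n" "D \<le> gdist n (0, 0) w"
    using exists_vertex_gdist_ge by blast
  have z: "(0, 0) \<in> verts n" by (simp add: verts_def)
  have "Max {gdist n u v | u v. u \<in> verts n \<and> v \<in> verts n} = D"
  proof (rule Max_eqI)
    show "D \<in> {gdist n u v | u v. u \<in> verts n \<and> v \<in> verts n}"
      using w z le_D[OF z w(1)] by (metis (mono_tags, lifting) le_antisym mem_Collect_eq)
  qed (auto intro: finite_subset[of _ "{..D}"] dest: le_D)
  then show ?thesis unfolding diameter_def D_def .
qed

lemma pow2_mod_3: "(2::nat)^n mod 3 = (if even n then 1 else 2)"
  by (induction n) (auto simp: mod_mult_right_eq[of 2 "2^_" 3, symmetric])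

theorem proposition1:
  fixes n :: nat
  shows "(odd n \<longrightarrow> 3 * diameter n = 2^(n+1) - 1) \<and>
         (even n \<longrightarrow> 3 * diameter n = 2 * (2^n - 1))"
proof -
  have "3 * diameter n = 2 * 2^n - 2 * 2^n mod 3"
    unfolding diameter_eq by (simp add: minus_mod_eq_mult_div)
  moreover have "(2::nat) * 2^n mod 3 = (if even n then 2 else 1)"
    using pow2_mod_3[of "Suc n"] by simp
  ultimately show ?thesis by (auto simp: right_diff_distrib')
qed

end
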